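(* Let $(x_K)_{K\ge1}\subseteq\{0,1\}^{\mathbb Z}$ be a coordinatewise non-increasing sequence with coordinatewise limit $x$, which is good: there is an increasing sequence $(N_i)$ such that for every $K\in\mathbb N\cup\{\infty\}$ (with $x_\infty=x$), $x_K$ is quasi-generic along $(N_i)$ for some measure $\nu_K$, and $\nu_K(1)\to\nu_\infty(1)$. Suppose that for each $K\ge1$ the subshift $\overline{[\mathbf 0,x_K]}$ is a measure-theoretically subordinate subshift with base measure $\nu_K$. Then both $\bigcap_{K\ge1}\overline{[\mathbf 0,x_K]}$ and $\overline{[\mathbf 0,x]}$ are measure-theoretically subordinate subshifts with base measure $\nu_\infty=\lim_{K\to\infty}\nu_K$.
   Context: $\sigma$ is the left shift on $\{0,1\}^{\mathbb Z}$; a subshift is a closed $\sigma$-invariant set; $\mathcal M(Y)$ is the set of shift-invariant Borel probability measures on $Y$; $\mu(1)=\mu(\{x:x_0=1\})$. A point $y$ is quasi-generic for $\mu$ along $(N_i)$ if $\frac1{N_i}\sum_{n\le N_i}\delta_{\sigma^ny}\to\mu$ weakly. For $w\le x$ (coordinatewise) in $\{0,1\}^{\mathbb Z}$, $\overline{[w,x]}$ denotes the closure of $\{\sigma^ny: w\le y\le x,\ n\in\mathbb Z\}$; $\mathbf 0$ is the all-zero sequence. Let $M$ be coordinatewise multiplication and $\pi_1$ the first-coordinate projection. A subshift $X\subseteq\{0,1\}^{\mathbb Z}$ is a measure-theoretically subordinate subshift if there exists $\nu\in\mathcal M(\{0,1\}^{\mathbb Z})$ with $\mathcal M(X)=\{M_*(\lambda):\lambda\in\mathcal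 M(\{0,1\}^{\mathbb Z}\times\{0,1\}^{\mathbb Z},\sigma\times\sigma),\ (\pi_1)_*\lambda=\nu\}$; any such $\nu$ is a base measure. *)

theory Defs
  imports "HOL-Probability.Probability"
begin

text \<open>Points of {0,1}^Z are functions int => bool (True = 1), with the product
topology (bool is discrete). Borel sets are taken w.r.t. this topology.\<close>

type_synonym cfg = "int \<Rightarrow> bool"

definition shift :: "cfg \<Rightarrow> cfg" where
  "shift y = (\<lambda>m. y (m + 1))"

definition shift_by :: "int \<Rightarrow> cfg \<Rightarrow> cfg" where
  "shift_by n y = (\<lambda>m. y (m + n))"

definition subshift :: "cfg set \<Rightarrow> bool" where
  "subshift X \<longleftrightarrow> closed X \<and> shift ` X \<subseteq> X \<and> X \<subseteq> shift ` X"

text \<open>closure of the orbits of all y with 0 <= y <= x (coordinatewise; 0 <= y is automatic)\<close>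
definition interval_orbit_closure :: "cfg \<Rightarrow> cfg set" where
  "interval_orbit_closure x = closure {shift_by n y | n y. y \<le> x}"

definition inv_measures :: "cfg set \<Rightarrow> cfg measure set" where
  "inv_measures X = {\<mu>. sets \<mu> = sets borel \<and> prob_space \<mu> \<and>
      distr \<mu> borel shift = \<mu> \<and> X \<in> sets \<mu> \<and> measure \<mu> X = 1}"

definition one_freq :: "cfg measure \<Rightarrow> real" where
  "one_freq \<mu> = measure \<mu> {y. y 0}"

definition coord_mult :: "cfg \<times> cfg \<Rightarrow> cfg" where
  "coord_mult p = (\<lambda>n. fst p n \<and> snd p n)"

definition subordinate_measures :: "cfg measure \<Rightarrow> cfg measure set" where
  "subordinate_measures \<nu> =
     {distr L borel coord_mult | L :: (cfg \<times> cfg) measure.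
        sets L = sets borel \<and> prob_space L \<and>
        distr L borel (map_prod shift shift) = L \<and>
        distr L borel fst = \<nu>}"

definition mts_subshift_with_base :: "cfg set \<Rightarrow> cfg measure \<Rightarrow> bool" where
  "mts_subshift_with_base X \<nu> \<longleftrightarrow> subshift X \<and> \<nu> \<in> inv_measures UNIV \<and>
      inv_measures X = subordinate_measures \<nu>"

definition mts_subshift :: "cfg set \<Rightarrow> bool" where
  "mts_subshift X \<longleftrightarrow> (\<exists>\<nu>. mts_subshift_with_base X \<nu>)"

definition weak_conv_seq :: "(nat \<Rightarrow> cfg measure) \<Rightarrow> cfg measure \<Rightarrow> bool" where
  "weak_conv_seq \<mu>s \<mu> \<longleftrightarrow> (\<forall>f :: cfg \<Rightarrow> real. continuous_on UNIV f \<longrightarrow>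
      (\<lambda>i. integral\<^sup>L (\<mu>s i) f) \<longlonglongrightarrow> integral\<^sup>L \<mu> f)"

definition quasi_generic :: "cfg \<Rightarrow> cfg measure \<Rightarrow> (nat \<Rightarrow> nat) \<Rightarrow> bool" where
  "quasi_generic y \<mu> N \<longleftrightarrow> sets \<mu> = sets borel \<and> prob_space \<mu> \<and>
     (\<forall>f :: cfg \<Rightarrow> real. continuous_on UNIV f \<longrightarrow>
       (\<lambda>i. (1 / real (N i)) * (\<Sum>n\<in>{1..N i}. f (shift_by (int n) y)))
         \<longlonglongrightarrow> integral\<^sup>L \<mu> f)"

end

theory Submission
  imports Defs
begin

text \<open>
  Since x \<le> x_K, the orbit averages of a continuous f along x_K and along x differ, up to the
  oscillation of f on a finite window, by a multiple of the density of the coordinates where the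
  two points disagree. Along the common times this density tends to \<nu>_K(1) - \<nu>_\<infinity>(1), which
  tends to 0; hence \<nu>_K converges weakly to \<nu>_\<infinity>.

  Let X be the [0,x]-closure and Y the intersection of the [0,x_K]-closures, so X \<subseteq> Y and every
  invariant measure on X is one on Y. A joining with base \<nu>_\<infinity> is mapped by M to an invariant
  measure on X, because \<nu>_\<infinity> lives on the orbit closure of x and X is closed under coordinatewise
  decrease. Conversely an invariant measure on Y is the M-image of a joining with base \<nu>_K for
  every K, and a weak limit point of these joinings is a joining with base \<nu>_\<infinity> and the same
  M-image. The three inclusions close up into equalities.

  Weak limit points exist and are unique because {0,1}^Z and its square embed continuously and
  injectively into the reals by ternary expansions: this reduces existence to Helly's selection
  theorem and uniqueness to continuous functions with a prescribed positivity set.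
\<close>

lemma compact_UNIV_cfg: "compact (UNIV :: cfg set)"
proof -
  have "compact_space (euclidean :: bool topology)"
    by (simp add: compact_space_def finite_imp_compact)
  then have "compact_space (euclidean :: cfg topology)"
    by (simp add: compact_space_product_topology flip: euclidean_product_topology)
  then show ?thesis
    by (simp add: compact_space_def compactin_euclidean_iff)
qed

lemma continuous_on_shift_by: "continuous_on UNIV (shift_by n)"
  unfolding shift_by_def
  by (intro continuous_on_coordinatewise_then_product continuous_on_product_coordinates)

lemma shift_eq_shift_by: "shift = shift_by 1"
  by (simp add: fun_eq_iff shift_def shift_by_def)

lemma shift_by_shift_by: "shift_by a (shift_by b y) = shift_by (a + b) y"
  by (simp add: shift_by_def ac_simps)

lemma shift_by_0 [simp]: "shift_by 0 y = y"
  by (simp add: shift_by_def)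

lemma continuous_on_shift: "continuous_on UNIV shift"
  by (simp add: shift_eq_shift_by continuous_on_shift_by)

lemma continuous_on_of_bool_coordinate: "continuous_on UNIV (\<lambda>y::cfg. of_bool (y m) :: real)"
  using continuous_on_compose2[OF Topological_Spaces.continuous_on_discrete[of UNIV "of_bool :: bool \<Rightarrow> real"]
      continuous_on_product_coordinates[of m]]
  by simp

lemma continuous_on_coord_mult: "continuous_on UNIV coord_mult"
proof -
  have "min a b = (a \<and> b)" for a b :: bool
    by (auto simp: min_def)
  moreover have "continuous_on UNIV (\<lambda>p::cfg \<times> cfg. \<lambda>n. min (fst p n) (snd p n))"
    by (intro continuous_on_coordinatewise_then_product continuous_on_min
        continuous_on_compose2[OF continuous_on_product_coordinates continuous_on_fst]
        continuous_on_compose2[OF continuous_on_product_coordinates continuous_on_snd] continuous_on_id) auto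
  ultimately show ?thesis
    by (simp add: coord_mult_def)
qed

lemma continuous_on_map_prod_shift: "continuous_on UNIV (map_prod shift shift)"
proof -
  have "map_prod shift shift = (\<lambda>p. (shift (fst p), shift (snd p)))"
    by (auto simp: fun_eq_iff)
  then show ?thesis
    by (simp only:) (intro continuous_on_Pair continuous_on_compose2[OF continuous_on_shift]
        continuous_on_fst continuous_on_snd continuous_on_id; simp)
qed

lemma measurable_continuous_borel:
  "sets M = sets borel \<Longrightarrow> continuous_on UNIV f \<Longrightarrow> f \<in> M \<rightarrow>\<^sub>M borel"
  using borel_measurable_continuous_onI measurable_cong_sets by blast


section \<open>A continuous injection of pairs of configurations into the reals\<close>

definition ternary :: "(nat \<Rightarrow> bool) \<Rightarrow> real" where
  "ternary a = (\<Sum>n. of_bool (a n) * (1/3) ^ n)"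

lemma summable_ternary: "summable (\<lambda>n. of_bool (a n) * (1/3::real) ^ n)"
  by (rule summable_comparison_test[OF _ summable_geometric[of "1/3::real"]]) auto

lemma continuous_on_ternary: "continuous_on UNIV ternary"
proof -
  have "uniform_limit UNIV (\<lambda>k a. \<Sum>n<k. of_bool (a n) * (1/3::real) ^ n) ternary sequentially"
    unfolding ternary_def
    by (rule Weierstrass_m_test[OF _ summable_geometric[of "1/3::real"]]) auto
  moreover have "continuous_on UNIV (\<lambda>a::nat \<Rightarrow> bool. \<Sum>n<k. of_bool (a n) * (1/3::real) ^ n)" for k
    by (intro continuous_on_sum continuous_on_mult continuous_on_const
        continuous_on_compose2[OF Topological_Spaces.continuous_on_discrete[of UNIV "of_bool :: bool \<Rightarrow> real"]
          continuous_on_product_coordinates]) auto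
  ultimately show ?thesis
    by (intro uniform_limit_theorem[OF always_eventually]) auto
qed

text \<open>The digits after the first difference contribute at most half of its weight.\<close>

lemma ternary_less:
  assumes "a n" "\<not> b n" "\<And>m. m < n \<Longrightarrow> a m = b m"
  shows "ternary b < ternary a"
proof -
  define d where "d m = (of_bool (a m) - of_bool (b m)) * (1/3::real) ^ m" for m
  have sd: "summable d"
    unfolding d_def left_diff_distrib by (intro summable_diff summable_ternary)
  have "ternary a - ternary b = suminf d"
    unfolding ternary_def d_def left_diff_distrib by (intro suminf_diff summable_ternary)
  also have "\<dots> = (\<Sum>i. d (i + Suc n)) + (\<Sum>i<Suc n. d i)"
    by (rule suminf_split_initial_segment[OF sd])
  also have "(\<Sum>i<Suc n. d i) = (1/3) ^ n"
    using assms by (simp add: d_def)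
  also have "(\<Sum>i. d (i + Suc n)) \<ge> (\<Sum>i. - ((1/3) ^ Suc n * (1/3) ^ i))"
    using summable_ignore_initial_segment[OF sd, of "Suc n"]
    by (intro suminf_le summable_minus summable_mult summable_geometric)
      (auto simp: d_def power_add mult.commute)
  moreover have "(\<Sum>i. - ((1/3::real) ^ Suc n * (1/3) ^ i)) = - ((1/3) ^ Suc n * (3/2))"
    using geometric_sums[of "1/3::real"] by (intro sums_unique[symmetric] sums_minus sums_mult) simp
  moreover have "- ((1/3::real) ^ Suc n * (3/2)) = - ((1/3) ^ n / 2)" "(1/3::real) ^ n > 0"
    by simp_all
  ultimately show ?thesis
    by linarith
qed

lemma inj_ternary: "inj ternary"
proof (rule injI, rule ccontr)
  fix a b assume eq: "ternary a = ternary b" and "a \<noteq> b"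
  then obtain k where "a k \<noteq> b k"
    by auto
  define n where "n = (LEAST n. a n \<noteq> b n)"
  have n: "a n \<noteq> b n"
    using \<open>a k \<noteq> b k\<close> unfolding n_def by (rule LeastI)
  have "\<And>m. m < n \<Longrightarrow> a m = b m"
    unfolding n_def using not_less_Least by blast
  then show False
    using ternary_less[of a n b] ternary_less[of b n a] n eq by (cases "a n") auto
qed

definition interleave :: "cfg \<times> cfg \<Rightarrow> nat \<Rightarrow> bool" where
  "interleave p n = (let (i, b) = (from_nat n :: int \<times> bool) in (if b then fst p else snd p) i)"

lemma inj_interleave: "inj interleave"
proof (rule injI)
  fix p q assume e: "interleave p = interleave q"
  have "fst p m = fst q m \<and> snd p m = snd q m" for m
    using fun_cong[OF e, of "to_nat (m, True)"] fun_cong[OF e, of "to_nat (m, False)"]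
    by (simp add: interleave_def)
  then show "p = q"
    by (simp add: prod_eq_iff fun_eq_iff)
qed

lemma continuous_on_interleave: "continuous_on UNIV interleave"
proof (rule continuous_on_coordinatewise_then_product)
  fix n
  obtain i b where ib: "from_nat n = (i :: int, b :: bool)"
    by fastforce
  show "continuous_on UNIV (\<lambda>p. interleave p n)"
    by (cases b) (auto simp: interleave_def ib
        intro!: continuous_on_compose2[OF continuous_on_product_coordinates continuous_on_fst]
        continuous_on_compose2[OF continuous_on_product_coordinates continuous_on_snd] continuous_on_id)
qed

definition pair_code :: "cfg \<times> cfg \<Rightarrow> real" where
  "pair_code = ternary \<circ> interleave"

lemma continuous_on_pair_code: "continuous_on UNIV pair_code"
  unfolding pair_code_def
  by (intro continuous_on_compose continuous_on_interleave continuous_on_subset[OF continuous_on_ternary]) simp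

lemma inj_pair_code: "inj pair_code"
  unfolding pair_code_def by (intro inj_compose inj_ternary inj_interleave)


section \<open>Weak convergence on compact spaces embedded in the reals\<close>

definition weakly_converges :: "(nat \<Rightarrow> 'a::topological_space measure) \<Rightarrow> 'a measure \<Rightarrow> bool" where
  "weakly_converges P Q \<longleftrightarrow> (\<forall>f :: 'a \<Rightarrow> real. continuous_on UNIV f \<longrightarrow>
      (\<lambda>k. integral\<^sup>L (P k) f) \<longlonglongrightarrow> integral\<^sup>L Q f)"

lemma weak_conv_seq_eq_weakly_converges: "weak_conv_seq = weakly_converges"
  by (simp add: fun_eq_iff weak_conv_seq_def weakly_converges_def)

lemma weakly_converges_const: "weakly_converges (\<lambda>_. M) M"
  by (simp add: weakly_converges_def)

lemma weakly_converges_subseq: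
  "weakly_converges P Q \<Longrightarrow> strict_mono r \<Longrightarrow> weakly_converges (P \<circ> r) Q"
  unfolding weakly_converges_def
  using LIMSEQ_subseq_LIMSEQ by (fastforce simp: comp_def)

lemma weakly_converges_distr:
  fixes g :: "'a::topological_space \<Rightarrow> 'b::topological_space"
  assumes "weakly_converges P Q" "continuous_on UNIV g"
    and "\<And>k. sets (P k) = sets borel" "sets Q = sets borel"
  shows "weakly_converges (\<lambda>k. distr (P k) borel g) (distr Q borel g)"
  unfolding weakly_converges_def
proof (intro allI impI)
  fix f :: "'b \<Rightarrow> real" assume f: "continuous_on UNIV f"
  have "integral\<^sup>L (distr M borel g) f = integral\<^sup>L M (\<lambda>p. f (g p))" if "sets M = sets borel" for M :: "'a measure"
    by (intro integral_distr measurable_continuous_borel[OF that assms(2)] borel_measurable_continuous_onI f)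
  moreover have "continuous_on UNIV (\<lambda>p. f (g p))"
    using continuous_on_compose2[OF f assms(2)] by simp
  ultimately show "(\<lambda>k. integral\<^sup>L (distr (P k) borel g) f) \<longlonglongrightarrow> integral\<^sup>L (distr Q borel g) f"
    using assms(1,3,4) by (simp add: weakly_converges_def)
qed

lemma AE_closed_of_weak_conv_m:
  assumes "\<And>k. real_distribution (\<rho> k)" "real_distribution M" "weak_conv_m \<rho> M"
    and "closed T" "T \<noteq> {}" "\<And>k. AE t in \<rho> k. t \<in> T"
  shows "AE t in M. t \<in> T"
proof -
  interpret M: real_distribution M by fact
  define h where "h t = min 1 (infdist t T)" for t
  have h: "continuous_on UNIV h"
    unfolding h_def by (intro continuous_intros)
  have h_bound: "norm (h t) \<le> 1" for t
    by (auto simp: h_def infdist_nonneg)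
  have "integral\<^sup>L (\<rho> k) h = 0" for k
  proof -
    interpret real_distribution "\<rho> k" by fact
    have "AE t in \<rho> k. h t = 0"
      using assms(6)[of k] by eventually_elim (simp add: h_def infdist_zero)
    then show ?thesis
      using integral_cong_AE[of h "\<rho> k" "\<lambda>_. 0"] borel_measurable_continuous_onI[OF h] by simp
  qed
  moreover have "(\<lambda>k. integral\<^sup>L (\<rho> k) h) \<longlonglongrightarrow> integral\<^sup>L M h"
    using assms(1-3) h h_bound
    by (intro weak_conv_imp_integral_bdd_continuous_conv) (auto simp: continuous_on_eq_continuous_at)
  ultimately have "integral\<^sup>L M h = 0"
    by (simp add: LIMSEQ_const_iff)
  moreover have "integrable M h"
    using h_bound borel_measurable_continuous_onI[OF h] by (intro M.integrable_const_bound[of h 1]) auto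
  ultimately have "AE t in M. h t = 0"
    using integral_nonneg_eq_0_iff_AE[of M h] by (auto simp: h_def infdist_nonneg)
  then show ?thesis
    by eventually_elim
      (use in_closure_iff_infdist_zero[OF assms(5)] closure_closed[OF assms(4)] in
        \<open>auto simp: h_def min_def split: if_splits\<close>)
qed

lemma tendsto_integral_min_1_mult:
  fixes h :: "'a::topological_space \<Rightarrow> real"
  assumes M: "finite_measure M" "sets M = sets borel" and h: "continuous_on UNIV h" "\<And>x. 0 \<le> h x"
  shows "(\<lambda>n. integral\<^sup>L M (\<lambda>x. min 1 (real n * h x))) \<longlonglongrightarrow> measure M {x. 0 < h x}"
proof -
  have "(\<lambda>n. min 1 (real n * h x)) \<longlonglongrightarrow> indicator {x. 0 < h x} x" for x
  proof (cases "0 < h x")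
    case True
    then have "eventually (\<lambda>n. 1 / h x < real n) sequentially"
      using filterlim_real_sequentially by (simp add: filterlim_at_top_dense)
    then have "eventually (\<lambda>n. min 1 (real n * h x) = 1) sequentially"
      by eventually_elim (use True in \<open>simp add: divide_less_eq\<close>)
    then show ?thesis
      using True by (simp add: tendsto_eventually)
  next
    case False
    then have "h x = 0"
      using h(2)[of x] by simp
    then show ?thesis
      by simp
  qed
  then have "(\<lambda>n. integral\<^sup>L M (\<lambda>x. min 1 (real n * h x))) \<longlonglongrightarrow> integral\<^sup>L M (indicator {x. 0 < h x})"
  proof (intro integral_dominated_convergence[where w="\<lambda>_. 1"] AE_I2)
    have "open {x. 0 < h x}"
      using open_vimage[OF _ h(1), of "{0<..}"] by (simp add: vimage_def)
    then have "{x. 0 < h x} \<in> sets M"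
      using M(2) by simp
    then show "indicator {x. 0 < h x} \<in> borel_measurable M"
      by simp
    show "(\<lambda>x. min 1 (real n * h x)) \<in> borel_measurable M" for n
      by (intro measurable_continuous_borel[OF M(2)] continuous_intros h(1))
    show "integrable M (\<lambda>_. 1::real)"
      using M(1) by (simp add: finite_measure.integrable_const)
    show "norm (min 1 (real n * h x)) \<le> 1" for n x
      using h(2)[of x] by simp
  qed
  then show ?thesis
    using sets_eq_imp_space_eq[OF M(2)] by simp
qed

locale compact_real_embedding =
  fixes code :: "'a::topological_space \<Rightarrow> real"
  assumes compact_UNIV: "compact (UNIV :: 'a set)"
    and continuous_code: "continuous_on UNIV code"
    and inj_code: "inj code"
begin

lemma bounded_continuous:
  assumes "continuous_on UNIV (f :: 'a \<Rightarrow> real)"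
  obtains B where "\<And>x. \<bar>f x\<bar> \<le> B"
  using compact_imp_bounded[OF compact_continuous_image[OF assms compact_UNIV]]
  by (auto simp: bounded_real)

lemma integrable_continuous:
  assumes "finite_measure M" "sets M = sets borel" "continuous_on UNIV (f :: 'a \<Rightarrow> real)"
  shows "integrable M f"
proof -
  obtain B where "\<And>x. \<bar>f x\<bar> \<le> B"
    using bounded_continuous[OF assms(3)] by blast
  then show ?thesis
    using measurable_continuous_borel[OF assms(2,3)]
    by (intro finite_measure.integrable_const_bound[OF assms(1), of f B]) auto
qed

text \<open>Take the distance of the code from the compact code image of the complement.\<close>

lemma open_eq_positive_set:
  assumes "open U"
  obtains h :: "'a \<Rightarrow> real" where "continuous_on UNIV h" "\<And>x. 0 \<le> h x" "U = {x. 0 < h x}"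
proof (cases "U = UNIV")
  case True
  then show ?thesis
    by (intro that[of "\<lambda>_. 1"]) auto
next
  case False
  define C where "C = code ` (- U)"
  have "compact (- U)"
    using compact_Int_closed[OF compact_UNIV, of "- U"] assms by auto
  then have "compact C"
    unfolding C_def by (intro compact_continuous_image continuous_on_subset[OF continuous_code]) auto
  moreover have "C \<noteq> {}"
    using False by (auto simp: C_def)
  ultimately have "infdist (code x) C = 0 \<longleftrightarrow> x \<notin> U" for x
    using in_closure_iff_infdist_zero[of C "code x"] inj_image_mem_iff[OF inj_code]
    by (auto simp: C_def compact_imp_closed)
  then show ?thesis
    by (intro that[of "\<lambda>x. infdist (code x) C"] continuous_on_infdist continuous_code)
      (auto simp: infdist_nonneg less_le)
qed

lemma measure_eqI_continuous:
  fixes M1 M2 :: "'a measure"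
  assumes "finite_measure M1" "finite_measure M2" "sets M1 = sets borel" "sets M2 = sets borel"
    and eq: "\<And>f. continuous_on UNIV (f :: 'a \<Rightarrow> real) \<Longrightarrow> integral\<^sup>L M1 f = integral\<^sup>L M2 f"
  shows "M1 = M2"
proof (rule measure_eqI_generator_eq[where E="{S. open S}" and \<Omega>=UNIV and A="\<lambda>_. UNIV"])
  show "Int_stable {S. open S}"
    by (auto simp: Int_stable_def)
  show "sets M1 = sigma_sets UNIV {S. open S}" "sets M2 = sigma_sets UNIV {S. open S}"
    using assms(3,4) by (auto simp: sets_borel)
  show "emeasure M1 UNIV \<noteq> \<infinity>"
    using finite_measure.emeasure_finite[OF assms(1)] by auto
  fix U :: "'a set" assume "U \<in> {S. open S}"
  then obtain h :: "'a \<Rightarrow> real" where h: "continuous_on UNIV h" "\<And>x. 0 \<le> h x" "U = {x. 0 < h x}"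
    using open_eq_positive_set by blast
  have "integral\<^sup>L M1 (\<lambda>x. min 1 (real n * h x)) = integral\<^sup>L M2 (\<lambda>x. min 1 (real n * h x))" for n
    by (intro eq continuous_intros h(1))
  then have "(\<lambda>n. integral\<^sup>L M1 (\<lambda>x. min 1 (real n * h x))) \<longlonglongrightarrow> measure M2 U"
    using tendsto_integral_min_1_mult[OF assms(2,4) h(1,2)] h(3) by simp
  then have "measure M1 U = measure M2 U"
    using tendsto_integral_min_1_mult[OF assms(1,3) h(1,2)] h(3) LIMSEQ_unique by simp
  then show "emeasure M1 U = emeasure M2 U"
    using assms(1,2) by (simp add: finite_measure.emeasure_eq_measure)
qed auto

lemma weakly_converges_unique:
  fixes Q R :: "'a measure"
  assumes "weakly_converges P Q" "weakly_converges P R"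
    and "finite_measure Q" "finite_measure R" "sets Q = sets borel" "sets R = sets borel"
  shows "Q = R"
proof (rule measure_eqI_continuous[OF assms(3-6)])
  fix f :: "'a \<Rightarrow> real" assume "continuous_on UNIV f"
  then show "integral\<^sup>L Q f = integral\<^sup>L R f"
    using assms(1,2) unfolding weakly_converges_def by (blast intro: LIMSEQ_unique)
qed

lemma tight_distr_code:
  assumes "\<And>k. prob_space (P k)" "\<And>k. sets (P k) = sets borel"
  shows "tight (\<lambda>k. distr (P k) borel code)"
proof -
  obtain B where B: "\<And>x. \<bar>code x\<bar> \<le> B"
    using bounded_continuous[OF continuous_code] by blast
  have meas: "code \<in> P k \<rightarrow>\<^sub>M borel" for k
    by (rule measurable_continuous_borel[OF assms(2) continuous_code])
  have "measure (distr (P k) borel code) {-B-1<..B+1} = 1" for k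
  proof -
    interpret prob_space "P k" by fact
    have "code x \<in> {-B-1<..B+1}" for x
      using B[of x] by (simp add: abs_le_iff)
    then have "code -` {-B-1<..B+1} \<inter> space (P k) = space (P k)"
      by auto
    then show ?thesis
      using measure_distr[OF meas, of "{-B-1<..B+1}"] by (simp add: prob_space)
  qed
  moreover have "real_distribution (distr (P k) borel code)" for k
    unfolding real_distribution_def real_distribution_axioms_def
    using prob_space.prob_space_distr[OF assms(1) meas] by simp
  moreover have "-B-1 < B+1"
    using B[of undefined] by linarith
  ultimately show ?thesis
    unfolding tight_def by (intro conjI allI impI exI[of _ "-B-1"] exI[of _ "B+1"]) auto
qed

definition decode :: "real \<Rightarrow> 'a" where
  "decode t = (if t \<in> range code then inv code t else undefined)"

lemma continuous_on_inv_code: "continuous_on (range code) (inv code)"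
  by (intro continuous_on_inv continuous_code compact_UNIV) (simp add: inj_code)

lemma continuous_on_decode: "continuous_on (range code) decode"
  using continuous_on_inv_code by (rule continuous_on_eq) (simp add: decode_def)

lemma measurable_decode: "decode \<in> borel \<rightarrow>\<^sub>M borel"
proof -
  have "closed (range code)"
    by (intro compact_imp_closed compact_continuous_image continuous_code compact_UNIV)
  then show ?thesis
    unfolding decode_def
    by (intro borel_measurable_continuous_on_if continuous_on_const continuous_on_inv_code) simp_all
qed

lemma AE_range_code_of_weak_conv_m:
  assumes "\<And>k. prob_space (P k)" "\<And>k. sets (P k) = sets borel"
    and "real_distribution M" "weak_conv_m (\<lambda>k. distr (P k) borel code) M"
  shows "AE t in M. t \<in> range code"
proof (rule AE_closed_of_weak_conv_m[OF _ assms(3,4)])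
  have meas: "code \<in> P k \<rightarrow>\<^sub>M borel" for k
    by (rule measurable_continuous_borel[OF assms(2) continuous_code])
  show "real_distribution (distr (P k) borel code)" for k
    unfolding real_distribution_def real_distribution_axioms_def
    using prob_space.prob_space_distr[OF assms(1) meas] by simp
  show "closed (range code)"
    by (intro compact_imp_closed compact_continuous_image continuous_code compact_UNIV)
  then show "AE t in distr (P k) borel code. t \<in> range code" for k
    by (subst AE_distr_iff[OF meas]) auto
qed simp

text \<open>Test functions are pulled back along decode, after extending them continuously from the
  compact code image by Tietze.\<close>

lemma weakly_converges_distr_decode:
  assumes P: "\<And>k. prob_space (P k)" "\<And>k. sets (P k) = sets borel"
    and M: "real_distribution M" "weak_conv_m (\<lambda>k. distr (P k) borel code) M"
  shows "weakly_converges P (distr M borel decode)"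
  unfolding weakly_converges_def
proof (intro allI impI)
  interpret M: real_distribution M by fact
  have decode: "decode \<in> M \<rightarrow>\<^sub>M borel"
    using measurable_decode by (simp add: measurable_cong_sets[OF M.events_eq_borel refl])
  fix f :: "'a \<Rightarrow> real" assume f: "continuous_on UNIV f"
  obtain B where B: "\<And>x. \<bar>f x\<bar> \<le> B"
    using bounded_continuous[OF f] by blast
  then have "0 \<le> B"
    by (meson abs_ge_zero order_trans)
  moreover have "continuous_on (range code) (f \<circ> decode)"
    by (intro continuous_on_compose continuous_on_decode continuous_on_subset[OF f]) simp
  moreover have "closed (range code)"
    by (intro compact_imp_closed compact_continuous_image continuous_code compact_UNIV)
  ultimately obtain g where g: "continuous_on UNIV g" "\<And>t. t \<in> range code \<Longrightarrow> g t = f (decode t)"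
      "\<And>t. norm (g t) \<le> B"
    using Tietze[of "range code" "f \<circ> decode" UNIV B] B by auto
  have meas: "code \<in> P k \<rightarrow>\<^sub>M borel" for k
    by (rule measurable_continuous_borel[OF P(2) continuous_code])
  have "integral\<^sup>L (P k) f = integral\<^sup>L (distr (P k) borel code) g" for k
    using g(2) by (simp add: integral_distr[OF meas borel_measurable_continuous_onI[OF g(1)]]
        decode_def inj_code)
  moreover have "(\<lambda>k. integral\<^sup>L (distr (P k) borel code) g) \<longlonglongrightarrow> integral\<^sup>L M g"
    using P M g(1,3) prob_space.prob_space_distr[OF P(1) meas]
    by (intro weak_conv_imp_integral_bdd_continuous_conv)
      (auto simp: continuous_on_eq_continuous_at real_distribution_def real_distribution_axioms_def)
  moreover have "integral\<^sup>L M g = integral\<^sup>L M (\<lambda>t. f (decode t))"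
    using AE_range_code_of_weak_conv_m[OF P M] g(2)
      measurable_comp[OF decode borel_measurable_continuous_onI[OF f]]
      measurable_continuous_borel[OF M.events_eq_borel g(1)]
    by (intro integral_cong_AE) (auto simp: comp_def elim!: eventually_mono)
  ultimately show "(\<lambda>k. integral\<^sup>L (P k) f) \<longlonglongrightarrow> integral\<^sup>L (distr M borel decode) f"
    by (simp add: integral_distr[OF decode borel_measurable_continuous_onI[OF f]])
qed

lemma weakly_convergent_subsequence:
  fixes P :: "nat \<Rightarrow> 'a measure"
  assumes P: "\<And>k. prob_space (P k)" "\<And>k. sets (P k) = sets borel"
  obtains r Q where "strict_mono r" "prob_space Q" "sets Q = sets borel" "weakly_converges (P \<circ> r) Q"
proof -
  have "tight (\<lambda>k. distr (P k) borel code)"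
    by (rule tight_distr_code[OF P])
  moreover have "strict_mono (id :: nat \<Rightarrow> nat)"
    by (simp add: strict_mono_def)
  ultimately obtain r M where r: "strict_mono r" "real_distribution M"
      "weak_conv_m (\<lambda>k. distr (P (r k)) borel code) M"
    using tight_imp_convergent_subsubsequence by (fastforce simp: comp_def)
  interpret M: real_distribution M by fact
  show thesis
  proof (rule that[OF r(1)])
    show "prob_space (distr M borel decode)"
      using measurable_decode measurable_cong_sets[OF M.events_eq_borel refl]
      by (intro M.prob_space_distr) simp
    show "weakly_converges (P \<circ> r) (distr M borel decode)"
      using P r(2,3) by (intro weakly_converges_distr_decode) (simp_all add: comp_def)
  qed simp
qed

lemma distr_eq_weak_limit:
  fixes g :: "'b::topological_space \<Rightarrow> 'a" and R :: "'a measure"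
  assumes "weakly_converges P Q" "continuous_on UNIV g"
    and "\<And>k. sets (P k) = sets borel" "sets Q = sets borel" "prob_space Q"
    and "weakly_converges (\<lambda>k. distr (P k) borel g) R" "finite_measure R" "sets R = sets borel"
  shows "distr Q borel g = R"
proof (rule weakly_converges_unique[OF weakly_converges_distr[OF assms(1-4)] assms(6)])
  show "finite_measure (distr Q borel g)"
    using prob_space.prob_space_distr[OF assms(5) measurable_continuous_borel[OF assms(4,2)]]
    by (simp add: prob_space_def)
qed (use assms in simp_all)

end


lemma compact_UNIV_cfg_pair: "compact (UNIV :: (cfg \<times> cfg) set)"
  using compact_Times[OF compact_UNIV_cfg compact_UNIV_cfg] by simp

interpretation cfg_pair: compact_real_embedding pair_code
  by standard (simp_all add: compact_UNIV_cfg_pair continuous_on_pair_code inj_pair_code)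

interpretation cfg: compact_real_embedding "\<lambda>z::cfg. pair_code (z, z)"
proof
  show "compact (UNIV :: cfg set)"
    by (rule compact_UNIV_cfg)
  show "continuous_on UNIV (\<lambda>z::cfg. pair_code (z, z))"
    by (intro continuous_on_compose2[OF continuous_on_pair_code] continuous_on_Pair continuous_on_id) auto
  show "inj (\<lambda>z::cfg. pair_code (z, z))"
    using inj_pair_code by (auto simp: inj_def)
qed


section \<open>Orbit averages of quasi-generic points\<close>

definition orbit_average :: "nat \<Rightarrow> (cfg \<Rightarrow> real) \<Rightarrow> cfg \<Rightarrow> real" where
  "orbit_average L f y = (\<Sum>n\<in>{1..L}. f (shift_by (int n) y)) / real L"

lemma quasi_generic_tendsto:
  "quasi_generic y \<mu> N \<Longrightarrow> continuous_on UNIV f \<Longrightarrow>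
    (\<lambda>i. orbit_average (N i) f y) \<longlonglongrightarrow> integral\<^sup>L \<mu> f"
  by (simp add: quasi_generic_def orbit_average_def)

lemma tendsto_bounded_divide_strict_mono:
  assumes "strict_mono N" "\<And>i. \<bar>e i\<bar> \<le> B"
  shows "(\<lambda>i. e i / real (N i)) \<longlonglongrightarrow> 0"
proof (rule Lim_null_comparison[where g="\<lambda>i. B / real (N i)"])
  show "eventually (\<lambda>i. norm (e i / real (N i)) \<le> B / real (N i)) sequentially"
    using assms(2) by (auto intro!: always_eventually divide_right_mono simp: abs_divide)
  have "filterlim (\<lambda>i. real (N i)) at_top sequentially"
    using filterlim_compose[OF filterlim_real_sequentially filterlim_subseq[OF assms(1)]] by (simp add: comp_def)
  then show "(\<lambda>i. B / real (N i)) \<longlonglongrightarrow> 0"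
    by (intro tendsto_divide_0[OF tendsto_const] filterlim_at_top_imp_at_infinity)
qed

lemma orbit_average_comp_shift:
  "orbit_average L (\<lambda>z. f (shift z)) y
    = orbit_average L f y + (f (shift_by (int (Suc L)) y) - f (shift_by 1 y)) / real L"
proof -
  define F where "F n = f (shift_by (int n) y)" for n
  have "(\<Sum>n\<in>{1..L}. f (shift (shift_by (int n) y))) = (\<Sum>n\<in>{1..L}. F (Suc n))"
    by (auto simp: F_def shift_eq_shift_by shift_by_shift_by add.commute intro!: sum.cong)
  also have "\<dots> = (\<Sum>n\<in>{1..L}. F n) + (F (Suc L) - F 1)"
    using sum_Suc_diff[of 1 L F] by (simp add: sum_subtractf)
  finally show ?thesis
    by (simp add: orbit_average_def F_def add_divide_distrib)
qed

lemma quasi_generic_inv_measures: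
  assumes qg: "quasi_generic y \<mu> N" and N: "strict_mono N"
  shows "\<mu> \<in> inv_measures UNIV"
proof -
  interpret prob_space \<mu>
    using qg by (simp add: quasi_generic_def)
  have sets: "sets \<mu> = sets borel"
    using qg by (simp add: quasi_generic_def)
  have meas: "shift \<in> \<mu> \<rightarrow>\<^sub>M borel"
    by (rule measurable_continuous_borel[OF sets continuous_on_shift])
  have "distr \<mu> borel shift = \<mu>"
  proof (rule cfg.measure_eqI_continuous)
    show "finite_measure (distr \<mu> borel shift)"
      using prob_space_distr[OF meas] by (simp add: prob_space_def)
    fix f :: "cfg \<Rightarrow> real" assume f: "continuous_on UNIV f"
    obtain B where B: "\<And>z. \<bar>f z\<bar> \<le> B"
      using cfg.bounded_continuous[OF f] by blast
    have "\<bar>f (shift_by (int (Suc L)) y) - f (shift_by 1 y)\<bar> \<le> 2 * B" for L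
      using abs_triangle_ineq4[of "f (shift_by (int (Suc L)) y)" "f (shift_by 1 y)"]
        B[of "shift_by (int (Suc L)) y"] B[of "shift_by 1 y"] by linarith
    then have "(\<lambda>i. (f (shift_by (int (Suc (N i))) y) - f (shift_by 1 y)) / real (N i)) \<longlonglongrightarrow> 0"
      by (rule tendsto_bounded_divide_strict_mono[OF N])
    then have "(\<lambda>i. orbit_average (N i) (\<lambda>z. f (shift z)) y) \<longlonglongrightarrow> integral\<^sup>L \<mu> f + 0"
      unfolding orbit_average_comp_shift by (intro tendsto_add quasi_generic_tendsto[OF qg f])
    moreover have "(\<lambda>i. orbit_average (N i) (\<lambda>z. f (shift z)) y) \<longlonglongrightarrow> integral\<^sup>L \<mu> (\<lambda>z. f (shift z))"
      using continuous_on_compose2[OF f continuous_on_shift] by (intro quasi_generic_tendsto[OF qg]) simp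
    ultimately have "integral\<^sup>L \<mu> (\<lambda>z. f (shift z)) = integral\<^sup>L \<mu> f"
      using LIMSEQ_unique by simp
    then show "integral\<^sup>L (distr \<mu> borel shift) f = integral\<^sup>L \<mu> f"
      by (simp add: integral_distr[OF meas borel_measurable_continuous_onI[OF f]])
  qed (use sets prob_space_axioms in \<open>auto simp: prob_space_def\<close>)
  then show ?thesis
    using sets prob_space_axioms sets_eq_imp_space_eq[OF sets] prob_space
    by (auto simp: inv_measures_def)
qed

lemma quasi_generic_orbit_closure:
  assumes qg: "quasi_generic y \<mu> N"
  shows "measure \<mu> (closure (range (\<lambda>n. shift_by n y))) = 1"
proof -
  interpret prob_space \<mu>
    using qg by (simp add: quasi_generic_def)
  have sets: "sets \<mu> = sets borel"
    using qg by (simp add: quasi_generic_def)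
  define C where "C = closure (range (\<lambda>n. shift_by n y))"
  obtain h :: "cfg \<Rightarrow> real" where h: "continuous_on UNIV h" "\<And>z. 0 \<le> h z" "- C = {z. 0 < h z}"
    using cfg.open_eq_positive_set[of "- C"] by (auto simp: C_def)
  have "h (shift_by n y) = 0" for n
  proof -
    have "shift_by n y \<in> C"
      unfolding C_def by (rule closure_subset[THEN subsetD]) simp
    then show ?thesis
      using h(2)[of "shift_by n y"] h(3) by (auto simp: less_le)
  qed
  then have "(\<lambda>i. orbit_average (N i) h y) = (\<lambda>i. 0)"
    by (simp add: orbit_average_def)
  then have "integral\<^sup>L \<mu> h = 0"
    using quasi_generic_tendsto[OF qg h(1)] by (simp add: LIMSEQ_const_iff)
  then have "AE z in \<mu>. h z = 0"
    using integral_nonneg_eq_0_iff_AE[of \<mu> h] cfg.integrable_continuous[OF _ sets h(1)] h(2)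
    by (simp add: finite_measure_axioms)
  then have "AE z in \<mu>. z \<in> C"
    by eventually_elim (metis h(3) ComplI less_irrefl mem_Collect_eq)
  then show ?thesis
    using AE_in_set_eq_1[of C] sets by (auto simp: C_def)
qed


section \<open>Weak convergence of the measures along the approximating points\<close>

definition window_variation_less :: "(cfg \<Rightarrow> real) \<Rightarrow> nat \<Rightarrow> real \<Rightarrow> bool" where
  "window_variation_less f W e \<longleftrightarrow>
     (\<forall>a b. (\<forall>m. \<bar>m\<bar> \<le> int W \<longrightarrow> a m = b m) \<longrightarrow> \<bar>f a - f b\<bar> < e)"

definition cylinder :: "cfg \<Rightarrow> int set \<Rightarrow> cfg set" where
  "cylinder a F = {b. \<forall>i\<in>F. b i = a i}"

lemma open_cylinder:
  assumes "finite F"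
  shows "open (cylinder a F)"
proof -
  have "open {b::cfg. \<forall>i\<in>F. b (id i) \<in> {a i}}"
    using assms by (intro product_topology_basis') (auto intro: discrete_topology_class.open_discrete)
  then show ?thesis
    by (simp add: cylinder_def)
qed

lemma cylinder_subset_open:
  assumes "open U" "a \<in> U"
  obtains F where "finite F" "cylinder a F \<subseteq> U"
proof -
  have "openin (product_topology (\<lambda>i. euclidean) UNIV) U"
    using assms(1) by (simp add: open_fun_def)
  from product_topology_open_contains_basis[OF this assms(2)]
  obtain X where X: "a \<in> (\<Pi>\<^sub>E i\<in>UNIV. X i)" "finite {i. X i \<noteq> UNIV}" "(\<Pi>\<^sub>E i\<in>UNIV. X i) \<subseteq> U"
    by auto
  have "cylinder a {i. X i \<noteq> UNIV} \<subseteq> (\<Pi>\<^sub>E i\<in>UNIV. X i)"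
  proof
    fix b assume b: "b \<in> cylinder a {i. X i \<noteq> UNIV}"
    have "b i \<in> X i" for i
    proof (cases "X i = UNIV")
      case False
      then have "b i = a i"
        using b by (simp add: cylinder_def)
      then show ?thesis
        using X(1) by (simp add: PiE_UNIV_domain Pi_iff)
    qed simp
    then show "b \<in> (\<Pi>\<^sub>E i\<in>UNIV. X i)"
      by (simp add: PiE_UNIV_domain)
  qed
  then have "cylinder a {i. X i \<noteq> UNIV} \<subseteq> U"
    using X(3) by (rule subset_trans)
  then show ?thesis
    by (rule that[OF X(2)])
qed

text \<open>A finite subcover by cylinders on which f oscillates by less than e yields one window.\<close>

lemma continuous_window_variation_less:
  assumes f: "continuous_on UNIV f" and "e > 0"
  obtains W where "window_variation_less f W e"
proof -
  have "\<exists>F. finite F \<and> cylinder a F \<subseteq> f -` {f a - e/2 <..< f a + e/2}" for a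
  proof (rule cylinder_subset_open)
    show "open (f -` {f a - e/2 <..< f a + e/2})"
      using open_vimage[OF _ f] by simp
  qed (use \<open>e > 0\<close> in auto)
  then obtain F where F: "\<And>a. finite (F a)" "\<And>a. cylinder a (F a) \<subseteq> f -` {f a - e/2 <..< f a + e/2}"
    by metis
  have cover: "UNIV \<subseteq> (\<Union>a. cylinder a (F a))"
    by (auto simp: cylinder_def)
  obtain C where C: "finite C" "UNIV \<subseteq> (\<Union>a\<in>C. cylinder a (F a))"
  proof (rule compactE_image[OF cfg.compact_UNIV _ cover])
    show "open (cylinder a (F a))" for a
      by (rule open_cylinder[OF F(1)])
  qed (rule that, assumption+)
  define W where "W = Max (insert 0 ((\<lambda>m. nat \<bar>m\<bar>) ` (\<Union>a\<in>C. F a)))"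
  have W: "\<bar>m\<bar> \<le> int W" if "c \<in> C" "m \<in> F c" for c m
  proof -
    have "nat \<bar>m\<bar> \<le> W"
      unfolding W_def using C(1) F(1) that by (intro Max_ge) auto
    then show ?thesis
      by linarith
  qed
  show thesis
  proof (rule that, unfold window_variation_less_def, intro allI impI)
    fix a b :: cfg assume ab: "\<forall>m. \<bar>m\<bar> \<le> int W \<longrightarrow> a m = b m"
    obtain c where c: "c \<in> C" "a \<in> cylinder c (F c)"
      using C(2) by blast
    have "b i = c i" if "i \<in> F c" for i
      using ab W[OF c(1) that] c(2) that by (auto simp: cylinder_def)
    then have "b \<in> cylinder c (F c)"
      by (simp add: cylinder_def)
    then have "f a \<in> {f c - e/2 <..< f c + e/2}" "f b \<in> {f c - e/2 <..< f c + e/2}"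
      using F(2)[of c] c(2) by blast+
    then show "\<bar>f a - f b\<bar> < e"
      by (simp add: abs_less_iff)
  qed
qed

lemma sum_shift_le:
  fixes D :: "int \<Rightarrow> real"
  assumes "\<And>m. 0 \<le> D m" "\<And>m. D m \<le> 1" "\<bar>j\<bar> \<le> int W"
  shows "(\<Sum>n\<in>{1..L}. D (int n + j)) \<le> (\<Sum>n\<in>{1..L}. D (int n)) + 2 * real W"
proof -
  have "(\<Sum>n\<in>{1..L}. D (int n + j)) = (\<Sum>m\<in>(\<lambda>n. int n + j) ` {1..L}. D m)"
    by (subst sum.reindex) (auto simp: inj_on_def)
  also have "\<dots> \<le> (\<Sum>m\<in>{1 - int W..int L + int W}. D m)"
    using assms(1,3) by (intro sum_mono2) auto
  also have "{1 - int W..int L + int W} = {1 - int W..0} \<union> ({1..int L} \<union> {int L + 1..int L + int W})"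
    by auto
  also have "(\<Sum>m\<in>\<dots>. D m)
      = (\<Sum>m\<in>{1 - int W..0}. D m) + ((\<Sum>m\<in>{1..int L}. D m) + (\<Sum>m\<in>{int L + 1..int L + int W}. D m))"
    by (subst sum.union_disjoint, auto)+
  also have "(\<Sum>m\<in>{1 - int W..0}. D m) \<le> real W"
    using sum_bounded_above[of "{1 - int W..0}" D 1] assms(2) by auto
  also have "(\<Sum>m\<in>{int L + 1..int L + int W}. D m) \<le> real W"
    using sum_bounded_above[of "{int L + 1..int L + int W}" D 1] assms(2) by auto
  also have "(\<Sum>m\<in>{1..int L}. D m) = (\<Sum>n\<in>{1..L}. D (int n))"
  proof -
    have "{1..int L} = int ` {1..L}"
      by (simp add: image_int_atLeastAtMost)
    then show ?thesis
      by (simp add: sum.reindex)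
  qed
  finally show ?thesis
    by simp
qed

text \<open>If the two points disagree somewhere in the window around n, the window sum of the
  disagreements is at least one and pays for the trivial bound 2 B.\<close>

lemma shift_difference_le:
  assumes W: "window_variation_less f W e" and B: "\<And>z. \<bar>f z\<bar> \<le> B"
    and "x \<le> x'" "0 \<le> e"
  shows "\<bar>f (shift_by n x') - f (shift_by n x)\<bar>
    \<le> e + 2 * B * (\<Sum>j\<in>{- int W..int W}. of_bool (x' (n + j)) - of_bool (x (n + j)))"
proof -
  have nonneg: "0 \<le> of_bool (x' m) - (of_bool (x m) :: real)" for m
    using \<open>x \<le> x'\<close> by (auto simp: le_fun_def)
  have "0 \<le> B"
    using B[of undefined] by linarith
  show ?thesis
  proof (cases "\<forall>j. \<bar>j\<bar> \<le> int W \<longrightarrow> x' (n + j) = x (n + j)")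
    case True
    then have "\<bar>f (shift_by n x') - f (shift_by n x)\<bar> < e"
      using W by (auto simp: window_variation_less_def shift_by_def add.commute)
    moreover have "0 \<le> 2 * B * (\<Sum>j\<in>{- int W..int W}. of_bool (x' (n + j)) - of_bool (x (n + j)))"
      using \<open>0 \<le> B\<close> nonneg by (simp add: sum_nonneg)
    ultimately show ?thesis
      by linarith
  next
    case False
    then obtain j where j: "\<bar>j\<bar> \<le> int W" "x' (n + j) \<noteq> x (n + j)"
      by auto
    then have "1 = of_bool (x' (n + j)) - (of_bool (x (n + j)) :: real)"
      using \<open>x \<le> x'\<close> by (auto simp: le_fun_def)
    also have "\<dots> \<le> (\<Sum>j\<in>{- int W..int W}. of_bool (x' (n + j)) - of_bool (x (n + j)))"
      using j nonneg by (intro member_le_sum) auto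
    finally have "2 * B \<le> 2 * B * (\<Sum>j\<in>{- int W..int W}. of_bool (x' (n + j)) - of_bool (x (n + j)))"
      using \<open>0 \<le> B\<close> by (simp add: mult_le_cancel_left1)
    moreover have "\<bar>f (shift_by n x') - f (shift_by n x)\<bar> \<le> 2 * B"
      using B[of "shift_by n x'"] B[of "shift_by n x"] by linarith
    ultimately show ?thesis
      using \<open>0 \<le> e\<close> by linarith
  qed
qed

lemma orbit_average_of_bool_coordinate:
  "orbit_average L (\<lambda>z. of_bool (z 0)) y = (\<Sum>n\<in>{1..L}. of_bool (y (int n))) / real L"
  by (simp add: orbit_average_def shift_by_def)

lemma orbit_average_difference_le:
  assumes W: "window_variation_less f W e" and B: "\<And>z. \<bar>f z\<bar> \<le> B"
    and "x \<le> x'" "0 \<le> e"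
  shows "\<bar>orbit_average L f x' - orbit_average L f x\<bar>
    \<le> e + 2 * B * (2 * real W + 1) * (orbit_average L (\<lambda>z. of_bool (z 0)) x'
        - orbit_average L (\<lambda>z. of_bool (z 0)) x + 2 * real W / real L)"
proof (cases "L = 0")
  case True
  then show ?thesis
    using \<open>0 \<le> e\<close> by (simp add: orbit_average_def)
next
  case False
  define D where "D m = of_bool (x' m) - (of_bool (x m) :: real)" for m
  have D: "0 \<le> D m" "D m \<le> 1" for m
    using \<open>x \<le> x'\<close> by (auto simp: D_def le_fun_def)
  have "0 \<le> B"
    using B[of undefined] by linarith
  define S where "S = (\<Sum>n\<in>{1..L}. D (int n))"
  have "\<bar>(\<Sum>n\<in>{1..L}. f (shift_by (int n) x')) - (\<Sum>n\<in>{1..L}. f (shift_by (int n) x))\<bar>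
      \<le> (\<Sum>n\<in>{1..L}. \<bar>f (shift_by (int n) x') - f (shift_by (int n) x)\<bar>)"
    by (simp add: sum_subtractf[symmetric] sum_abs)
  also have "\<dots> \<le> (\<Sum>n\<in>{1..L}. e + 2 * B * (\<Sum>j\<in>{- int W..int W}. D (int n + j)))"
    using shift_difference_le[OF W B \<open>x \<le> x'\<close> \<open>0 \<le> e\<close>] by (intro sum_mono) (simp add: D_def)
  also have "\<dots> = real L * e + 2 * B * (\<Sum>j\<in>{- int W..int W}. \<Sum>n\<in>{1..L}. D (int n + j))"
    by (simp add: sum.distrib sum_distrib_left sum.swap[of _ "{- int W..int W}"])
  also have "\<dots> \<le> real L * e + 2 * B * (\<Sum>j\<in>{- int W..int W}. S + 2 * real W)"
    unfolding S_def using \<open>0 \<le> B\<close> D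
    by (intro add_left_mono mult_left_mono sum_mono sum_shift_le) (auto simp: abs_le_iff)
  also have "\<dots> = real L * e + 2 * B * (2 * real W + 1) * (S + 2 * real W)"
    by simp
  finally have "\<bar>orbit_average L f x' - orbit_average L f x\<bar>
      \<le> (real L * e + 2 * B * (2 * real W + 1) * (S + 2 * real W)) / real L"
    by (simp add: orbit_average_def diff_divide_distrib[symmetric] abs_divide divide_right_mono)
  also have "\<dots> = e + 2 * B * (2 * real W + 1) * (S / real L + 2 * real W / real L)"
    using False by (simp add: field_simps)
  also have "S / real L = orbit_average L (\<lambda>z. of_bool (z 0)) x' - orbit_average L (\<lambda>z. of_bool (z 0)) x"
    by (simp add: S_def D_def orbit_average_of_bool_coordinate sum_subtractf diff_divide_distrib)
  finally show ?thesis .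
qed

lemma integral_of_bool_coordinate:
  assumes "sets \<nu> = sets borel"
  shows "integral\<^sup>L \<nu> (\<lambda>z. of_bool (z 0)) = one_freq \<nu>"
proof -
  have "integral\<^sup>L \<nu> (\<lambda>z. of_bool (z 0)) = integral\<^sup>L \<nu> (indicator {z::cfg. z 0})"
    by (intro arg_cong[where f="integral\<^sup>L \<nu>"]) (auto simp: indicator_def fun_eq_iff)
  also have "\<dots> = measure \<nu> ({z. z 0} \<inter> space \<nu>)"
    by (rule Bochner_Integration.integral_indicator)
  finally show ?thesis
    using sets_eq_imp_space_eq[OF assms] by (simp add: one_freq_def)
qed

lemma integral_difference_le:
  assumes qg': "quasi_generic x' \<nu>' N" and qg: "quasi_generic x \<nu> N" and N: "strict_mono N"
    and f: "continuous_on UNIV f" and W: "window_variation_less f W e" and B: "\<And>z. \<bar>f z\<bar> \<le> B"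
    and "x \<le> x'" "0 \<le> e"
  shows "\<bar>integral\<^sup>L \<nu>' f - integral\<^sup>L \<nu> f\<bar> \<le> e + 2 * B * (2 * real W + 1) * (one_freq \<nu>' - one_freq \<nu>)"
proof (rule LIMSEQ_le)
  let ?occ = "\<lambda>z::cfg. of_bool (z 0) :: real"
  show "(\<lambda>i. \<bar>orbit_average (N i) f x' - orbit_average (N i) f x\<bar>)
      \<longlonglongrightarrow> \<bar>integral\<^sup>L \<nu>' f - integral\<^sup>L \<nu> f\<bar>"
    by (intro tendsto_rabs tendsto_diff quasi_generic_tendsto[OF qg' f] quasi_generic_tendsto[OF qg f])
  have freq: "(\<lambda>i. orbit_average (N i) ?occ y) \<longlonglongrightarrow> one_freq M" if "quasi_generic y M N" for y M
    using quasi_generic_tendsto[OF that continuous_on_of_bool_coordinate[of 0]] that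
    by (simp add: integral_of_bool_coordinate quasi_generic_def)
  have "(\<lambda>i. orbit_average (N i) ?occ x' - orbit_average (N i) ?occ x + 2 * real W / real (N i))
      \<longlonglongrightarrow> one_freq \<nu>' - one_freq \<nu> + 0"
    by (intro tendsto_add tendsto_diff freq[OF qg'] freq[OF qg] tendsto_bounded_divide_strict_mono[OF N]) auto
  then show "(\<lambda>i. e + 2 * B * (2 * real W + 1)
        * (orbit_average (N i) ?occ x' - orbit_average (N i) ?occ x + 2 * real W / real (N i)))
      \<longlonglongrightarrow> e + 2 * B * (2 * real W + 1) * (one_freq \<nu>' - one_freq \<nu>)"
    by (intro tendsto_intros) simp
  show "\<exists>i0. \<forall>i\<ge>i0. \<bar>orbit_average (N i) f x' - orbit_average (N i) f x\<bar>
      \<le> e + 2 * B * (2 * real W + 1)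
        * (orbit_average (N i) ?occ x' - orbit_average (N i) ?occ x + 2 * real W / real (N i))"
    using orbit_average_difference_le[OF W B \<open>x \<le> x'\<close> \<open>0 \<le> e\<close>] by blast
qed

lemma le_limit_of_antimono:
  fixes xs :: "nat \<Rightarrow> 'a \<Rightarrow> bool"
  assumes "\<And>K. K \<ge> K0 \<Longrightarrow> xs (Suc K) \<le> xs K"
    and "\<And>n. eventually (\<lambda>K. xs K n = x n) sequentially" and "K \<ge> K0"
  shows "x \<le> xs K"
proof (rule le_funI)
  fix n
  have decreasing: "xs (K + d) \<le> xs K" for d
  proof (induction d)
    case (Suc d)
    have "xs (Suc (K + d)) \<le> xs (K + d)"
      using assms(1,3) by simp
    then have "xs (Suc (K + d)) \<le> xs K"
      using Suc.IH by (rule order_trans)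
    then show ?case
      by simp
  qed simp
  obtain K1 where K1: "\<And>K'. K' \<ge> K1 \<Longrightarrow> xs K' n = x n"
    using assms(2)[of n] by (auto simp: eventually_sequentially)
  have "x n = xs (K + K1) n"
    using K1[of "K + K1"] by simp
  also have "\<dots> \<le> xs K n"
    using decreasing[of K1] by (rule le_funD)
  finally show "x n \<le> xs K n" .
qed

text \<open>Choose a window on which f varies by less than r/2; the remaining error is controlled by
  the difference of the frequencies of ones.\<close>

lemma weak_conv_seq_of_one_freq:
  fixes xs :: "nat \<Rightarrow> cfg" and \<nu> :: "nat \<Rightarrow> cfg measure"
  assumes noninc: "\<And>K. K \<ge> 1 \<Longrightarrow> xs (Suc K) \<le> xs K"
    and lim: "\<And>n. eventually (\<lambda>K. xs K n = x n) sequentially"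
    and N: "strict_mono N"
    and qg: "\<And>K. K \<ge> 1 \<Longrightarrow> quasi_generic (xs K) (\<nu> K) N"
    and qg_inf: "quasi_generic x \<nu>inf N"
    and freq: "(\<lambda>K. one_freq (\<nu> K)) \<longlonglongrightarrow> one_freq \<nu>inf"
  shows "weak_conv_seq \<nu> \<nu>inf"
  unfolding weak_conv_seq_def
proof (intro allI impI)
  fix f :: "cfg \<Rightarrow> real" assume f: "continuous_on UNIV f"
  obtain B where B: "\<And>z. \<bar>f z\<bar> \<le> B"
    using cfg.bounded_continuous[OF f] by blast
  then have "0 \<le> B"
    by (meson abs_ge_zero order_trans)
  show "(\<lambda>K. integral\<^sup>L (\<nu> K) f) \<longlonglongrightarrow> integral\<^sup>L \<nu>inf f"
  proof (rule LIMSEQ_I)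
    fix r :: real assume "0 < r"
    then obtain W where W: "window_variation_less f W (r/2)"
      using continuous_window_variation_less[OF f, of "r/2"] by auto
    define C where "C = 2 * B * (2 * real W + 1)"
    have "0 \<le> C"
      using \<open>0 \<le> B\<close> by (simp add: C_def)
    then obtain K0 where K0: "\<And>K. K \<ge> K0 \<Longrightarrow> norm (one_freq (\<nu> K) - one_freq \<nu>inf) < r / 2 / (C + 1)"
      using LIMSEQ_D[OF freq, of "r / 2 / (C + 1)"] \<open>0 < r\<close> by auto
    show "\<exists>K0. \<forall>K\<ge>K0. norm (integral\<^sup>L (\<nu> K) f - integral\<^sup>L \<nu>inf f) < r"
    proof (intro exI allI impI)
      fix K assume K: "max K0 1 \<le> K"
      have "x \<le> xs K"
        using le_limit_of_antimono[OF noninc lim] K by auto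
      then have "\<bar>integral\<^sup>L (\<nu> K) f - integral\<^sup>L \<nu>inf f\<bar> \<le> r/2 + C * (one_freq (\<nu> K) - one_freq \<nu>inf)"
        unfolding C_def using K \<open>0 < r\<close>
        by (intro integral_difference_le[OF qg qg_inf N f W B]) auto
      also have "C * (one_freq (\<nu> K) - one_freq \<nu>inf) \<le> C * (r / 2 / (C + 1))"
        using K0[of K] K \<open>0 \<le> C\<close> by (intro mult_left_mono) auto
      also have "\<dots> < r/2"
        using \<open>0 \<le> C\<close> \<open>0 < r\<close> by (simp add: field_simps)
      finally show "norm (integral\<^sup>L (\<nu> K) f - integral\<^sup>L \<nu>inf f) < r"
        by simp
    qed
  qed
qed


section \<open>Closures of intervals under the shift\<close>

lemma closed_interval_orbit_closure: "closed (interval_orbit_closure x)"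
  by (simp add: interval_orbit_closure_def)

lemma image_interval_orbit_closure_subset:
  assumes "continuous_on UNIV g" "\<And>n y. y \<le> x \<Longrightarrow> g (shift_by n y) \<in> {shift_by n y | n y. y \<le> x}"
  shows "g ` interval_orbit_closure x \<subseteq> interval_orbit_closure x"
  unfolding interval_orbit_closure_def
  using assms by (intro image_closure_subset continuous_on_subset[OF assms(1)]) (auto intro: closure_subset[THEN subsetD])

lemma shift_by_interval_orbit_closure:
  "y \<in> interval_orbit_closure x \<Longrightarrow> shift_by k y \<in> interval_orbit_closure x"
  using image_interval_orbit_closure_subset[OF continuous_on_shift_by, of x k]
  by (fastforce simp: shift_by_shift_by)

text \<open>Meeting with a fixed y is continuous and maps the generating set into itself.\<close>

lemma interval_orbit_closure_down:
  assumes "z \<in> interval_orbit_closure x" "y \<le> z"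
  shows "y \<in> interval_orbit_closure x"
proof -
  let ?r = "\<lambda>a::cfg. \<lambda>m. a m \<and> y m"
  have "continuous_on UNIV (\<lambda>a::cfg. a m \<and> y m)" for m
    by (cases "y m") (simp_all add: continuous_on_product_coordinates)
  then have "continuous_on UNIV ?r"
    by (rule continuous_on_coordinatewise_then_product)
  moreover have "?r (shift_by n y') \<in> {shift_by n y | n y. y \<le> x}" if "y' \<le> x" for n y'
  proof -
    have "?r (shift_by n y') = shift_by n (shift_by (-n) (?r (shift_by n y')))"
      by (simp add: shift_by_shift_by)
    moreover have "shift_by (-n) (?r (shift_by n y')) \<le> x"
      using that by (auto simp: le_fun_def shift_by_def)
    ultimately show ?thesis
      by blast
  qed
  ultimately have "?r z \<in> interval_orbit_closure x"
    using image_interval_orbit_closure_subset[of ?r x] assms(1) by blast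
  moreover have "?r z = y"
    using assms(2) by (auto simp: le_fun_def)
  ultimately show ?thesis
    by simp
qed

lemma orbit_closure_subset_interval_orbit_closure:
  "closure (range (\<lambda>n. shift_by n x)) \<subseteq> interval_orbit_closure x"
  unfolding interval_orbit_closure_def by (rule closure_mono) auto

lemma interval_orbit_closure_mono: "x \<le> x' \<Longrightarrow> interval_orbit_closure x \<subseteq> interval_orbit_closure x'"
  unfolding interval_orbit_closure_def by (rule closure_mono) (auto intro: order_trans)

lemma subshift_if_shift_by_invariant:
  assumes "closed X" "\<And>y k. y \<in> X \<Longrightarrow> shift_by k y \<in> X"
  shows "subshift X"
  unfolding subshift_def
proof (intro conjI)
  show "X \<subseteq> shift ` X"
  proof
    fix y assume "y \<in> X"
    then have "shift_by (-1) y \<in> X"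
      by (rule assms(2))
    moreover have "y = shift (shift_by (-1) y)"
      by (simp add: shift_eq_shift_by shift_by_shift_by)
    ultimately show "y \<in> shift ` X"
      by blast
  qed
qed (use assms in \<open>auto simp: shift_eq_shift_by\<close>)

lemma subshift_interval_orbit_closure: "subshift (interval_orbit_closure x)"
  by (intro subshift_if_shift_by_invariant closed_interval_orbit_closure shift_by_interval_orbit_closure)

lemma subshift_Inter_interval_orbit_closure: "subshift (\<Inter>K\<in>A. interval_orbit_closure (xs K))"
  by (intro subshift_if_shift_by_invariant closed_INT ballI closed_interval_orbit_closure)
    (auto intro: shift_by_interval_orbit_closure)



section \<open>Invariant measures and joinings\<close>

lemma inv_measures_mono:
  assumes "X \<subseteq> Y" "closed Y"
  shows "inv_measures X \<subseteq> inv_measures Y"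
proof
  fix \<mu> assume \<mu>: "\<mu> \<in> inv_measures X"
  then interpret prob_space \<mu>
    by (simp add: inv_measures_def)
  have "Y \<in> sets \<mu>"
    using \<mu> assms(2) by (simp add: inv_measures_def)
  moreover have "measure \<mu> X \<le> measure \<mu> Y"
    using \<mu> assms(1) \<open>Y \<in> sets \<mu>\<close> by (intro finite_measure_mono) auto
  moreover have "measure \<mu> X = 1"
    using \<mu> by (simp add: inv_measures_def)
  ultimately have "measure \<mu> Y = 1"
    using prob_le_1[of Y] by linarith
  then show "\<mu> \<in> inv_measures Y"
    using \<mu> \<open>Y \<in> sets \<mu>\<close> by (simp add: inv_measures_def)
qed

lemma distr_coord_mult_shift_invariant:
  assumes "sets L = sets borel" "distr L borel (map_prod shift shift) = L"
  shows "distr (distr L borel coord_mult) borel shift = distr L borel coord_mult"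
proof -
  have "distr (distr L borel coord_mult) borel shift = distr L borel (shift \<circ> coord_mult)"
    by (intro distr_distr borel_measurable_continuous_onI continuous_on_shift
        measurable_continuous_borel[OF assms(1) continuous_on_coord_mult])
  also have "shift \<circ> coord_mult = coord_mult \<circ> map_prod shift shift"
    by (auto simp: fun_eq_iff shift_def coord_mult_def)
  also have "distr L borel (coord_mult \<circ> map_prod shift shift)
      = distr (distr L borel (map_prod shift shift)) borel coord_mult"
    by (intro distr_distr[symmetric] borel_measurable_continuous_onI continuous_on_coord_mult
        measurable_continuous_borel[OF assms(1) continuous_on_map_prod_shift])
  finally show ?thesis
    using assms(2) by simp
qed

text \<open>The first marginal lives on the orbit closure of x, and multiplying a point of it
  coordinatewise by anything stays in the closure for x, which is closed under coordinatewise
  decrease.\<close>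

lemma subordinate_measures_subset_inv_measures:
  assumes qg: "quasi_generic x \<nu> N"
  shows "subordinate_measures \<nu> \<subseteq> inv_measures (interval_orbit_closure x)"
proof
  fix \<mu> assume "\<mu> \<in> subordinate_measures \<nu>"
  then obtain L :: "(cfg \<times> cfg) measure" where L: "\<mu> = distr L borel coord_mult" "sets L = sets borel"
    "prob_space L" "distr L borel (map_prod shift shift) = L" "distr L borel fst = \<nu>"
    by (auto simp: subordinate_measures_def)
  interpret L: prob_space L
    by (rule L(3))
  have mult: "coord_mult \<in> L \<rightarrow>\<^sub>M borel"
    by (rule measurable_continuous_borel[OF L(2) continuous_on_coord_mult])
  let ?C = "closure (range (\<lambda>n. shift_by n x))"
  have "coord_mult p \<in> interval_orbit_closure x" if "fst p \<in> ?C" for p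
    using interval_orbit_closure_down[OF orbit_closure_subset_interval_orbit_closure[THEN subsetD, OF that]]
    by (simp add: coord_mult_def le_fun_def)
  then have "fst -` ?C \<inter> space L \<subseteq> coord_mult -` interval_orbit_closure x \<inter> space L"
    by blast
  moreover have "coord_mult -` interval_orbit_closure x \<inter> space L \<in> sets L"
    using closed_interval_orbit_closure by (intro measurable_sets[OF mult]) simp
  ultimately have "measure L (fst -` ?C \<inter> space L) \<le> measure \<mu> (interval_orbit_closure x)"
    unfolding L(1) using closed_interval_orbit_closure
    by (subst measure_distr[OF mult]) (simp_all add: L.finite_measure_mono)
  moreover have "measure L (fst -` ?C \<inter> space L) = 1"
    using measure_distr[OF measurable_continuous_borel[OF L(2) continuous_on_fst[OF continuous_on_id]], of ?C]
      quasi_generic_orbit_closure[OF qg] L(5)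
    by simp
  moreover have "prob_space \<mu>"
    unfolding L(1) by (rule L.prob_space_distr[OF mult])
  ultimately show "\<mu> \<in> inv_measures (interval_orbit_closure x)"
    using distr_coord_mult_shift_invariant[OF L(2,4)] closed_interval_orbit_closure
      prob_space.prob_le_1[of \<mu> "interval_orbit_closure x"]
    by (auto simp: inv_measures_def L(1))
qed

text \<open>Invariance, the first marginal and the image under coord_mult all pass to a weak limit
  point of the joinings.\<close>

lemma subordinate_measures_weak_limit:
  assumes sub: "\<And>k. \<mu> \<in> subordinate_measures (\<nu> k)" and conv: "weakly_converges \<nu> \<nu>inf"
    and "prob_space \<nu>inf" "sets \<nu>inf = sets borel"
  shows "\<mu> \<in> subordinate_measures \<nu>inf"
proof -
  have "\<exists>L :: (cfg \<times> cfg) measure. \<mu> = distr L borel coord_mult \<and> sets L = sets borel \<and> prob_space L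
      \<and> distr L borel (map_prod shift shift) = L \<and> distr L borel fst = \<nu> k" for k
    using sub[of k] by (simp add: subordinate_measures_def)
  then obtain \<Lambda> :: "nat \<Rightarrow> (cfg \<times> cfg) measure" where \<Lambda>: "\<And>k. \<mu> = distr (\<Lambda> k) borel coord_mult"
    "\<And>k. sets (\<Lambda> k) = sets borel" "\<And>k. prob_space (\<Lambda> k)"
    "\<And>k. distr (\<Lambda> k) borel (map_prod shift shift) = \<Lambda> k" "\<And>k. distr (\<Lambda> k) borel fst = \<nu> k"
    by metis
  obtain r \<Lambda>lim where r: "strict_mono r" "prob_space \<Lambda>lim" "sets \<Lambda>lim = sets borel"
      "weakly_converges (\<Lambda> \<circ> r) \<Lambda>lim"
    by (rule cfg_pair.weakly_convergent_subsequence[OF \<Lambda>(3,2)])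
  have "distr \<Lambda>lim borel (map_prod shift shift) = \<Lambda>lim"
  proof (rule cfg_pair.distr_eq_weak_limit[OF r(4) continuous_on_map_prod_shift])
    show "weakly_converges (\<lambda>k. distr ((\<Lambda> \<circ> r) k) borel (map_prod shift shift)) \<Lambda>lim"
      using r(4) \<Lambda>(4) by (simp add: comp_def)
  qed (use r \<Lambda>(2) in \<open>simp_all add: prob_space_def\<close>)
  moreover have "distr \<Lambda>lim borel fst = \<nu>inf"
  proof (rule cfg.distr_eq_weak_limit[OF r(4) continuous_on_fst[OF continuous_on_id]])
    show "weakly_converges (\<lambda>k. distr ((\<Lambda> \<circ> r) k) borel fst) \<nu>inf"
      using weakly_converges_subseq[OF conv r(1)] \<Lambda>(5) by (simp add: comp_def)
  qed (use r \<Lambda>(2) assms(3,4) in \<open>simp_all add: prob_space_def\<close>)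
  moreover have "distr \<Lambda>lim borel coord_mult = \<mu>"
  proof (rule cfg.distr_eq_weak_limit[OF r(4) continuous_on_coord_mult])
    show "weakly_converges (\<lambda>k. distr ((\<Lambda> \<circ> r) k) borel coord_mult) \<mu>"
      using weakly_converges_const[of \<mu>] \<Lambda>(1)[symmetric] by (simp add: comp_def)
    show "finite_measure \<mu>" "sets \<mu> = sets borel"
      using prob_space.prob_space_distr[OF \<Lambda>(3) measurable_continuous_borel[OF \<Lambda>(2) continuous_on_coord_mult]]
        \<Lambda>(1)[of 0] by (simp_all add: prob_space_def)
  qed (use r \<Lambda>(2) in \<open>simp_all add: prob_space_def\<close>)
  ultimately show "\<mu> \<in> subordinate_measures \<nu>inf"
    unfolding subordinate_measures_def using r(2,3) by (intro CollectI exI[of _ "\<Lambda>lim"]) simp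
qed

lemma inv_measures_subset_subordinate_measures:
  fixes xs :: "nat \<Rightarrow> cfg" and \<nu> :: "nat \<Rightarrow> cfg measure"
  assumes Y: "\<And>K. K \<ge> 1 \<Longrightarrow> Y \<subseteq> interval_orbit_closure (xs K)"
    and sub: "\<And>K. K \<ge> 1 \<Longrightarrow> mts_subshift_with_base (interval_orbit_closure (xs K)) (\<nu> K)"
    and conv: "weakly_converges \<nu> \<nu>inf" and base: "\<nu>inf \<in> inv_measures UNIV"
  shows "inv_measures Y \<subseteq> subordinate_measures \<nu>inf"
proof
  fix \<mu> assume \<mu>: "\<mu> \<in> inv_measures Y"
  have "\<mu> \<in> subordinate_measures ((\<nu> \<circ> Suc) k)" for k
  proof -
    have "Y \<subseteq> interval_orbit_closure (xs (Suc k))"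
      using Y by simp
    then have "\<mu> \<in> inv_measures (interval_orbit_closure (xs (Suc k)))"
      using inv_measures_mono[OF _ closed_interval_orbit_closure] \<mu> by blast
    then show ?thesis
      using sub[of "Suc k"] by (simp add: mts_subshift_with_base_def)
  qed
  moreover have "weakly_converges (\<nu> \<circ> Suc) \<nu>inf"
    by (rule weakly_converges_subseq[OF conv]) (simp add: strict_mono_Suc_iff)
  ultimately show "\<mu> \<in> subordinate_measures \<nu>inf"
    by (rule subordinate_measures_weak_limit) (use base in \<open>simp_all add: inv_measures_def\<close>)
qed

theorem proposition3p9:
  fixes xs :: "nat \<Rightarrow> cfg" and x :: cfg
    and N :: "nat \<Rightarrow> nat" and \<nu> :: "nat \<Rightarrow> cfg measure" and \<nu>inf :: "cfg measure"
  assumes noninc: "\<And>K. K \<ge> 1 \<Longrightarrow> xs (Suc K) \<le> xs K"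
    and lim: "\<And>n. eventually (\<lambda>K. xs K n = x n) sequentially"
    and N_incr: "strict_mono N"
    and qg: "\<And>K. K \<ge> 1 \<Longrightarrow> quasi_generic (xs K) (\<nu> K) N"
    and qg_inf: "quasi_generic x \<nu>inf N"
    and freq: "(\<lambda>K. one_freq (\<nu> K)) \<longlonglongrightarrow> one_freq \<nu>inf"
    and sub: "\<And>K. K \<ge> 1 \<Longrightarrow> mts_subshift_with_base (interval_orbit_closure (xs K)) (\<nu> K)"
  shows "weak_conv_seq \<nu> \<nu>inf
    \<and> mts_subshift_with_base (\<Inter>K\<in>{1..}. interval_orbit_closure (xs K)) \<nu>inf
    \<and> mts_subshift_with_base (interval_orbit_closure x) \<nu>inf"
proof -
  define X where "X = interval_orbit_closure x"
  define Y where "Y = (\<Inter>K\<in>{1..}. interval_orbit_closure (xs K))"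
  have conv: "weak_conv_seq \<nu> \<nu>inf"
    by (rule weak_conv_seq_of_one_freq[OF noninc lim N_incr qg qg_inf freq])
  have base: "\<nu>inf \<in> inv_measures UNIV"
    by (rule quasi_generic_inv_measures[OF qg_inf N_incr])
  have "X \<subseteq> Y"
    unfolding X_def Y_def
    using interval_orbit_closure_mono[OF le_limit_of_antimono[OF noninc lim]] by auto
  moreover have "closed Y"
    unfolding Y_def by (intro closed_INT ballI closed_interval_orbit_closure)
  ultimately have "inv_measures X \<subseteq> inv_measures Y"
    by (rule inv_measures_mono)
  moreover have "subordinate_measures \<nu>inf \<subseteq> inv_measures X"
    unfolding X_def by (rule subordinate_measures_subset_inv_measures[OF qg_inf])
  moreover have "inv_measures Y \<subseteq> subordinate_measures \<nu>inf"
    using sub conv base unfolding Y_def weak_conv_seq_eq_weakly_converges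
    by (intro inv_measures_subset_subordinate_measures) auto
  ultimately show ?thesis
    using conv base subshift_interval_orbit_closure subshift_Inter_interval_orbit_closure
    unfolding mts_subshift_with_base_def X_def Y_def by auto
qed

end
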